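(* Let $(V,E,c,p)$ be a PCSTP instance with potential terminals $T_p=\{t_1,\dots,t_s\}$ and let $(V',A',T',c',r')$ be the SAP obtained from it by Transformation 1 (see context), with $M=\sum_{t\in T_p}p(t)$. Let $\tilde{\mathcal U}\subseteq\{U\subset V': r'\notin U,\ U\cap T'\neq\emptyset\}$ and consider the LP $$\min\ c'^Tx-M\quad\text{s.t.}\quad x(\delta^-(U))\ge 1\ \ (U\in\tilde{\mathcal U}),\qquad 0\le x(a)\le 1\ \ (a\in A').$$ Let $\tilde L$ be its optimal value, let $\pi\ge0$ be an optimal dual solution for the constraints indexed by $\tilde{\mathcal U}$, and let $\tilde c(a):=c'(a)-\sum_{U\in\tilde{\mathcal U}:\,a\in\delta^-(U)}\pi_U$ be the reduced costs. Let $B$ be an upper bound on the cost $C$ of an optimal solution of the PCSTP instance. Let $t_i\in T_p$ and let $\bar T_i\subseteq T_p$ be such that, for every optimal solution $S$ of the PCSTP instance, $V(S)\cap\bar T_i\neq\emptyset$ implies $t_i\in V(S)$. If $$\sum_{j:\ t_j\in\bar T_i}\tilde c\big((v_0',t_j')\big)+\tilde L> B,$$ then $t_i$ is contained in every optimal solution of the PCSTP instance.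
   Context: A PCSTP instance $(V,E,c,p)$: finite undirected connected graph, $c:E\to\mathbb{Q}_{>0}$, $p:V\to\mathbb{Q}_{\ge0}$; for a tree $S$ (connected acyclic subgraph with at least one vertex) $C(S):=\sum_{e\in E(S)}c(e)+\sum_{v\in V\setminus V(S)}p(v)$; optimal solutions minimize $C$; $T_p:=\{v:p(v)>0\}$. A Steiner arborescence problem (SAP) $(V',A',T',c',r')$: digraph $(V',A')$, costs $c'\ge0$, terminals $T'$, root $r'\in T'$; for $U\subseteq V'$, $\delta^-(U)$ is the set of arcs entering $U$, and $x(F):=\sum_{a\in F}x(a)$. Transformation 1 (PCSTP to SAP): set $V':=V$, $A':=\{(v,w),(w,v):\{v,w\}\in E\}$ with $c'((v,w)):=c(\{v,w\})$; $M:=\sum_{t\in T_p}p(t)$; add new vertices $r'$ and $v_0'$; for each $i=1,\dots,s$: add arc $(r',t_i)$ of cost $M$, add a new vertex $t_i'$, add arcs $(t_i,v_0')$ and $(t_i,t_i')$ of cost $0$, and add arc $(v_0',t_i')$ of cost $p(t_i)$. Terminals $T':=\{t_1',\dots,t_s'\}\cup\{r'\}$, root $r'$. *)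

theory Defs
  imports Complex_Main
begin

definition pcstp_instance ::
  "'v set \<Rightarrow> 'v set set \<Rightarrow> ('v set \<Rightarrow> real) \<Rightarrow> ('v \<Rightarrow> real) \<Rightarrow> bool" where
  "pcstp_instance V E c p \<longleftrightarrow>
     finite V \<and> V \<noteq> {} \<and>
     (\<forall>e\<in>E. \<exists>v w. v \<in> V \<and> w \<in> V \<and> v \<noteq> w \<and> e = {v, w}) \<and>
     (\<forall>u\<in>V. \<forall>w\<in>V. (u, w) \<in> {(a, b). {a, b} \<in> E}\<^sup>*) \<and>
     (\<forall>e\<in>E. c e \<in> \<rat> \<and> c e > 0) \<and>
     (\<forall>v\<in>V. p v \<in> \<rat> \<and> p v \<ge> 0)"

definition adj :: "'v set set \<Rightarrow> ('v \<times> 'v) set" where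
  "adj ES = {(a, b). {a, b} \<in> ES}"

definition connected_sub :: "'v set \<Rightarrow> 'v set set \<Rightarrow> bool" where
  "connected_sub VS ES \<longleftrightarrow> (\<forall>u\<in>VS. \<forall>w\<in>VS. (u, w) \<in> (adj ES)\<^sup>*)"

definition has_cycle :: "'v set set \<Rightarrow> bool" where
  "has_cycle ES \<longleftrightarrow> (\<exists>cs. length cs \<ge> 3 \<and> distinct cs \<and>
      (\<forall>i < length cs. {cs ! i, cs ! ((i + 1) mod length cs)} \<in> ES))"

definition is_tree :: "'v set \<Rightarrow> 'v set set \<Rightarrow> 'v set \<Rightarrow> 'v set set \<Rightarrow> bool" where
  "is_tree V E VS ES \<longleftrightarrow> VS \<noteq> {} \<and> VS \<subseteq> V \<and> ES \<subseteq> E \<and> (\<forall>e\<in>ES. e \<subseteq> VS) \<and>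
     connected_sub VS ES \<and> \<not> has_cycle ES"

definition pcst_cost ::
  "'v set \<Rightarrow> ('v set \<Rightarrow> real) \<Rightarrow> ('v \<Rightarrow> real) \<Rightarrow> 'v set \<Rightarrow> 'v set set \<Rightarrow> real" where
  "pcst_cost V c p VS ES = (\<Sum>e\<in>ES. c e) + (\<Sum>v\<in>V - VS. p v)"

definition pcst_optimal ::
  "'v set \<Rightarrow> 'v set set \<Rightarrow> ('v set \<Rightarrow> real) \<Rightarrow> ('v \<Rightarrow> real) \<Rightarrow> 'v set \<Rightarrow> 'v set set \<Rightarrow> bool" where
  "pcst_optimal V E c p VS ES \<longleftrightarrow> is_tree V E VS ES \<and>
     (\<forall>VS' ES'. is_tree V E VS' ES' \<longrightarrow> pcst_cost V c p VS ES \<le> pcst_cost V c p VS' ES')"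

definition Tp :: "'v set \<Rightarrow> ('v \<Rightarrow> real) \<Rightarrow> 'v set" where
  "Tp V p = {v \<in> V. p v > 0}"

definition bigM :: "'v set \<Rightarrow> ('v \<Rightarrow> real) \<Rightarrow> real" where
  "bigM V p = (\<Sum>t\<in>Tp V p. p t)"

text \<open>Vertices of the SAP: original vertices, the new root r', the new vertex v0',
  and a copy t' for every potential terminal t.\<close>
datatype 'v sap_node = Orig 'v | Root | V0 | Copy 'v

definition sap_nodes :: "'v set \<Rightarrow> ('v \<Rightarrow> real) \<Rightarrow> 'v sap_node set" where
  "sap_nodes V p = Orig ` V \<union> {Root, V0} \<union> Copy ` Tp V p"

definition sap_arcs ::
  "'v set \<Rightarrow> 'v set set \<Rightarrow> ('v \<Rightarrow> real) \<Rightarrow> ('v sap_node \<times> 'v sap_node) set" where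
  "sap_arcs V E p =
     {(Orig v, Orig w) | v w. {v, w} \<in> E}
     \<union> {(Root, Orig t) | t. t \<in> Tp V p}
     \<union> {(Orig t, V0) | t. t \<in> Tp V p}
     \<union> {(Orig t, Copy t) | t. t \<in> Tp V p}
     \<union> {(V0, Copy t) | t. t \<in> Tp V p}"

definition sap_terminals :: "'v set \<Rightarrow> ('v \<Rightarrow> real) \<Rightarrow> 'v sap_node set" where
  "sap_terminals V p = Copy ` Tp V p \<union> {Root}"

fun sap_cost_aux ::
  "('v set \<Rightarrow> real) \<Rightarrow> ('v \<Rightarrow> real) \<Rightarrow> real \<Rightarrow> 'v sap_node \<times> 'v sap_node \<Rightarrow> real" where
  "sap_cost_aux c p M (Orig v, Orig w) = c {v, w}"
| "sap_cost_aux c p M (Root, Orig t) = M"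
| "sap_cost_aux c p M (Orig t, V0) = 0"
| "sap_cost_aux c p M (Orig t, Copy t') = 0"
| "sap_cost_aux c p M (V0, Copy t) = p t"
| "sap_cost_aux c p M _ = 0"

definition sap_cost ::
  "'v set \<Rightarrow> ('v set \<Rightarrow> real) \<Rightarrow> ('v \<Rightarrow> real) \<Rightarrow> 'v sap_node \<times> 'v sap_node \<Rightarrow> real" where
  "sap_cost V c p = sap_cost_aux c p (bigM V p)"

definition delta_in :: "('n \<times> 'n) set \<Rightarrow> 'n set \<Rightarrow> ('n \<times> 'n) set" where
  "delta_in A U = {a \<in> A. fst a \<notin> U \<and> snd a \<in> U}"

definition admissible_cuts :: "'v set \<Rightarrow> ('v \<Rightarrow> real) \<Rightarrow> 'v sap_node set set" where
  "admissible_cuts V p = {U. U \<subset> sap_nodes V p \<and> Root \<notin> U \<and> U \<inter> sap_terminals V p \<noteq> {}}"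

definition lp_feasible :: "('n \<times> 'n) set \<Rightarrow> 'n set set \<Rightarrow> ('n \<times> 'n \<Rightarrow> real) \<Rightarrow> bool" where
  "lp_feasible A Ucal x \<longleftrightarrow> (\<forall>U\<in>Ucal. sum x (delta_in A U) \<ge> 1) \<and>
     (\<forall>a\<in>A. 0 \<le> x a \<and> x a \<le> 1)"

definition lp_obj :: "('n \<times> 'n) set \<Rightarrow> ('n \<times> 'n \<Rightarrow> real) \<Rightarrow> real \<Rightarrow> ('n \<times> 'n \<Rightarrow> real) \<Rightarrow> real" where
  "lp_obj A cost M x = (\<Sum>a\<in>A. cost a * x a) - M"

definition lp_optimal_value ::
  "('n \<times> 'n) set \<Rightarrow> 'n set set \<Rightarrow> ('n \<times> 'n \<Rightarrow> real) \<Rightarrow> real \<Rightarrow> real \<Rightarrow> bool" where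
  "lp_optimal_value A Ucal cost M L \<longleftrightarrow>
     (\<exists>x. lp_feasible A Ucal x \<and> lp_obj A cost M x = L) \<and>
     (\<forall>x. lp_feasible A Ucal x \<longrightarrow> L \<le> lp_obj A cost M x)"

text \<open>Dual LP: variables pi_U >= 0 for the cut constraints and sigma_a >= 0 for the
  constraints x(a) <= 1.\<close>
definition dual_feasible ::
  "('n \<times> 'n) set \<Rightarrow> 'n set set \<Rightarrow> ('n \<times> 'n \<Rightarrow> real) \<Rightarrow> ('n set \<Rightarrow> real) \<Rightarrow> ('n \<times> 'n \<Rightarrow> real) \<Rightarrow> bool" where
  "dual_feasible A Ucal cost \<pi> \<sigma> \<longleftrightarrow>
     (\<forall>U\<in>Ucal. 0 \<le> \<pi> U) \<and> (\<forall>a\<in>A. 0 \<le> \<sigma> a) \<and>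
     (\<forall>a\<in>A. (\<Sum>U\<in>{U\<in>Ucal. a \<in> delta_in A U}. \<pi> U) - \<sigma> a \<le> cost a)"

definition dual_obj ::
  "('n \<times> 'n) set \<Rightarrow> 'n set set \<Rightarrow> real \<Rightarrow> ('n set \<Rightarrow> real) \<Rightarrow> ('n \<times> 'n \<Rightarrow> real) \<Rightarrow> real" where
  "dual_obj A Ucal M \<pi> \<sigma> = (\<Sum>U\<in>Ucal. \<pi> U) - (\<Sum>a\<in>A. \<sigma> a) - M"

definition dual_optimal ::
  "('n \<times> 'n) set \<Rightarrow> 'n set set \<Rightarrow> ('n \<times> 'n \<Rightarrow> real) \<Rightarrow> real \<Rightarrow> ('n set \<Rightarrow> real) \<Rightarrow> ('n \<times> 'n \<Rightarrow> real) \<Rightarrow> bool" where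
  "dual_optimal A Ucal cost M \<pi> \<sigma> \<longleftrightarrow> dual_feasible A Ucal cost \<pi> \<sigma> \<and>
     (\<forall>\<pi>' \<sigma>'. dual_feasible A Ucal cost \<pi>' \<sigma>' \<longrightarrow> dual_obj A Ucal M \<pi>' \<sigma>' \<le> dual_obj A Ucal M \<pi> \<sigma>)"

definition reduced_cost ::
  "('n \<times> 'n) set \<Rightarrow> 'n set set \<Rightarrow> ('n \<times> 'n \<Rightarrow> real) \<Rightarrow> ('n set \<Rightarrow> real) \<Rightarrow> 'n \<times> 'n \<Rightarrow> real" where
  "reduced_cost A Ucal cost \<pi> a = cost a - (\<Sum>U\<in>{U\<in>Ucal. a \<in> delta_in A U}. \<pi> U)"

end

theory Submission
  imports Defs
begin

text \<open>Suppose an optimal tree \<open>S\<close> avoids \<open>t\<^sub>i\<close>; then it also avoids \<open>Tbar\<close>. Orient \<open>S\<close> away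
  from a potential terminal \<open>r\<close> in it and add the arcs \<open>(r', r)\<close>, \<open>(r, v\<^sub>0')\<close>, \<open>(t, t')\<close> for
  the potential terminals \<open>t\<close> of \<open>S\<close> and \<open>(v\<^sub>0', t')\<close> for all others. This arc set costs at
  most \<open>C(S) + M\<close>, meets every cut of the LP and contains all arcs \<open>(v\<^sub>0', t')\<close> with
  \<open>t \<in> Tbar\<close>. Splitting each arc cost into its reduced cost plus the duals of the cuts it
  enters, dual feasibility and LP strong duality (a consequence of Farkas' lemma) bound its
  cost minus \<open>M\<close> from below by the reduced costs over \<open>Tbar\<close> plus \<open>L\<close>, which exceeds
  \<open>B \<ge> C(S)\<close>.\<close>

section \<open>Farkas' lemma\<close>

text \<open>To avoid fixing a vector-space structure on the domain, the operation
  \<open>comb s x z\<close> stands for \<open>x - s z\<close>, and a functional is linear if it respects it.\<close>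

definition comb_linear :: "(real \<Rightarrow> 'x \<Rightarrow> 'x \<Rightarrow> 'x) \<Rightarrow> ('x \<Rightarrow> real) \<Rightarrow> bool" where
  "comb_linear comb f \<longleftrightarrow> (\<forall>s x z. f (comb s x z) = f x - s * f z)"

lemma comb_linear_eliminate:
  assumes "comb_linear comb f" "comb_linear comb g"
  shows "comb_linear comb (\<lambda>x. f x - f z / g z * g x)"
  unfolding comb_linear_def
proof (intro allI)
  fix s x w
  have f: "f (comb s x w) = f x - s * f w" and g: "g (comb s x w) = g x - s * g w"
    using assms unfolding comb_linear_def by blast+
  show "f (comb s x w) - f z / g z * g (comb s x w) =
      f x - f z / g z * g x - s * (f w - f z / g z * g w)"
    unfolding f g by (simp add: algebra_simps diff_divide_distrib)
qed

lemma farkas_hypothesis_projection: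
  assumes "\<forall>i\<in>insert k I. comb_linear comb (a i)" "comb_linear comb b"
    and "\<forall>x. (\<forall>i\<in>insert k I. a i x \<ge> 0) \<longrightarrow> b x \<ge> 0" "a k z \<noteq> 0"
    and "\<forall>i\<in>I. a i x - a i z / a k z * a k x \<ge> 0"
  shows "b x - b z / a k z * a k x \<ge> 0"
proof -
  define y where "y = comb (a k x / a k z) x z"
  have "a k y = 0" using assms(1,4) unfolding comb_linear_def y_def by simp
  moreover have "a i y = a i x - a i z / a k z * a k x" if "i \<in> I" for i
    using assms(1) that unfolding comb_linear_def y_def by auto
  ultimately have "b y \<ge> 0" using assms(3,5) by auto
  moreover have "b y = b x - b z / a k z * a k x"
    using assms(2) unfolding comb_linear_def y_def by auto
  ultimately show ?thesis by simp
qed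

lemma farkas_lemma:
  fixes a :: "'i \<Rightarrow> 'x \<Rightarrow> real" and b :: "'x \<Rightarrow> real"
  assumes "finite I" "\<forall>i\<in>I. comb_linear comb (a i)" "comb_linear comb b"
    "\<forall>x. (\<forall>i\<in>I. a i x \<ge> 0) \<longrightarrow> b x \<ge> 0"
  shows "\<exists>l. (\<forall>i\<in>I. l i \<ge> 0) \<and> (\<forall>x. b x = (\<Sum>i\<in>I. l i * a i x))"
  using assms
proof (induction I arbitrary: a b rule: finite_induct)
  case empty
  have "b x = 0" for x
  proof -
    \<comment> \<open>\<open>comb 2 x x\<close> plays the role of \<open>-x\<close>.\<close>
    have "b (comb 2 x x) = - b x" using empty(2) unfolding comb_linear_def by simp
    moreover have "b (comb 2 x x) \<ge> 0" "b x \<ge> 0" using empty(3) by auto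
    ultimately show ?thesis by linarith
  qed
  then show ?case by simp
next
  case (insert k I)
  show ?case
  proof (cases "\<forall>x. (\<forall>i\<in>I. a i x \<ge> 0) \<longrightarrow> b x \<ge> 0")
    case True
    then obtain l where l: "\<forall>i\<in>I. l i \<ge> 0" "\<forall>x. b x = (\<Sum>i\<in>I. l i * a i x)"
      using insert.IH[of a b] insert.prems by auto
    have "(\<Sum>i\<in>I. (l(k:=0)) i * a i x) = (\<Sum>i\<in>I. l i * a i x)" for x
      using insert.hyps(2) by (intro sum.cong) auto
    then show ?thesis using l insert.hyps by (intro exI[of _ "l(k:=0)"]) auto
  next
    case False
    then obtain z where z: "\<forall>i\<in>I. a i z \<ge> 0" "b z < 0" by force
    have akz: "a k z < 0" using z insert.prems(3) by (metis insert_iff not_le)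
    \<comment> \<open>Project along \<open>z\<close> onto the hyperplane \<open>a k = 0\<close> and apply the induction hypothesis there.\<close>
    define a' where "a' i x = a i x - a i z / a k z * a k x" for i x
    define b' where "b' x = b x - b z / a k z * a k x" for x
    have lin_k: "comb_linear comb (a k)" using insert.prems(1) by auto
    have "\<forall>i\<in>I. comb_linear comb (a' i)"
      unfolding a'_def using insert.prems(1) lin_k by (blast intro: comb_linear_eliminate)
    moreover have "comb_linear comb b'"
      unfolding b'_def using insert.prems(2) lin_k by (rule comb_linear_eliminate)
    moreover have "\<forall>x. (\<forall>i\<in>I. a' i x \<ge> 0) \<longrightarrow> b' x \<ge> 0"
      using farkas_hypothesis_projection[OF insert.prems] akz unfolding a'_def b'_def by simp
    ultimately obtain \<mu> where \<mu>: "\<forall>i\<in>I. \<mu> i \<ge> 0" "\<forall>x. b' x = (\<Sum>i\<in>I. \<mu> i * a' i x)"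
      using insert.IH[of a' b'] by auto
    define lk where "lk = (b z - (\<Sum>i\<in>I. \<mu> i * a i z)) / a k z"
    have "(\<Sum>i\<in>I. \<mu> i * a i z) \<ge> 0" using \<mu>(1) z(1) by (intro sum_nonneg) auto
    then have "lk \<ge> 0" unfolding lk_def using akz z(2) by (intro divide_nonpos_neg) auto
    have "b x = (\<Sum>i\<in>I. \<mu> i * a i x) + lk * a k x" for x
    proof -
      have "b x = b' x + b z / a k z * a k x" unfolding b'_def by simp
      also have "b' x = (\<Sum>i\<in>I. \<mu> i * a i x) - (\<Sum>i\<in>I. \<mu> i * a i z) / a k z * a k x"
        unfolding \<mu>(2)[rule_format] a'_def
        by (simp add: algebra_simps sum_subtractf sum_distrib_left sum_distrib_right sum_divide_distrib)
      finally show ?thesis unfolding lk_def by (simp add: algebra_simps diff_divide_distrib)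
    qed
    moreover have "(\<Sum>i\<in>I. (\<mu>(k := lk)) i * a i x) = (\<Sum>i\<in>I. \<mu> i * a i x)" for x
      using insert.hyps(2) by (intro sum.cong) auto
    ultimately show ?thesis using insert.hyps \<mu>(1) \<open>lk \<ge> 0\<close>
      by (intro exI[of _ "\<mu>(k := lk)"]) auto
  qed
qed

section \<open>Strong duality for the cut LP\<close>

text \<open>Rows of the homogenized cut LP in the variables \<open>(x, t)\<close>, whose solutions with
  \<open>t > 0\<close> are the positive multiples of the LP-feasible points.\<close>

datatype ('u, 'a) lp_row = Cut_row 'u | Lower_row 'a | Upper_row 'a | Scale_row

definition lp_rows :: "'u set \<Rightarrow> 'a set \<Rightarrow> ('u, 'a) lp_row set" where
  "lp_rows Ucal A = Cut_row ` Ucal \<union> Lower_row ` A \<union> Upper_row ` A \<union> {Scale_row}"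

fun cut_lp_row ::
  "('n \<times> 'n) set \<Rightarrow> ('n set, 'n \<times> 'n) lp_row \<Rightarrow> ('n \<times> 'n \<Rightarrow> real) \<times> real \<Rightarrow> real" where
  "cut_lp_row A (Cut_row U) (x, t) = sum x (delta_in A U) - t"
| "cut_lp_row A (Lower_row a) (x, t) = x a"
| "cut_lp_row A (Upper_row a) (x, t) = t - x a"
| "cut_lp_row A Scale_row (x, t) = t"

definition lp_comb ::
  "real \<Rightarrow> ('a \<Rightarrow> real) \<times> real \<Rightarrow> ('a \<Rightarrow> real) \<times> real \<Rightarrow> ('a \<Rightarrow> real) \<times> real" where
  "lp_comb s p q = (\<lambda>a. fst p a - s * fst q a, snd p - s * snd q)"

lemma comb_linear_cut_lp_row:
  assumes "finite A"
  shows "comb_linear lp_comb (cut_lp_row A i)"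
proof -
  have "finite (delta_in A U)" for U using assms unfolding delta_in_def by simp
  then show ?thesis
    unfolding comb_linear_def lp_comb_def
    by (cases i) (auto simp: sum_subtractf sum_distrib_left algebra_simps)
qed

lemma mem_lp_rows [simp]:
  "Cut_row U \<in> lp_rows Ucal A \<longleftrightarrow> U \<in> Ucal"
  "Lower_row a \<in> lp_rows Ucal A \<longleftrightarrow> a \<in> A"
  "Upper_row a \<in> lp_rows Ucal A \<longleftrightarrow> a \<in> A"
  "Scale_row \<in> lp_rows Ucal A"
  by (auto simp: lp_rows_def)

lemma sum_lp_rows:
  assumes "finite Ucal" "finite A"
  shows "(\<Sum>i\<in>lp_rows Ucal A. g i) =
    (\<Sum>U\<in>Ucal. g (Cut_row U)) + (\<Sum>a\<in>A. g (Lower_row a)) + (\<Sum>a\<in>A. g (Upper_row a)) + g Scale_row"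
proof -
  have "(\<Sum>i\<in>lp_rows Ucal A. g i) =
      (\<Sum>i\<in>Cut_row ` Ucal. g i) + (\<Sum>i\<in>Lower_row ` A. g i) + (\<Sum>i\<in>Upper_row ` A. g i) + g Scale_row"
    unfolding lp_rows_def using assms by (subst sum.union_disjoint; auto)+
  also have "\<dots> =
      (\<Sum>U\<in>Ucal. g (Cut_row U)) + (\<Sum>a\<in>A. g (Lower_row a)) + (\<Sum>a\<in>A. g (Upper_row a)) + g Scale_row"
    by (simp add: sum.reindex inj_on_def)
  finally show ?thesis .
qed

lemma homogenized_cut_lp_bound:
  assumes L: "lp_optimal_value A Ucal cost M L"
    and rows: "\<forall>i\<in>lp_rows Ucal A. cut_lp_row A i (x, t) \<ge> 0"
  shows "(\<Sum>a\<in>A. cost a * x a) \<ge> (L + M) * t"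
proof -
  have cut: "sum x (delta_in A U) \<ge> t" if "U \<in> Ucal" for U
    using rows that by (metis cut_lp_row.simps(1) diff_ge_0_iff_ge mem_lp_rows(1))
  have box: "0 \<le> x a" "x a \<le> t" if "a \<in> A" for a
    using rows that by (metis cut_lp_row.simps(2,3) diff_ge_0_iff_ge mem_lp_rows(2,3))+
  have "t \<ge> 0" using rows by (metis cut_lp_row.simps(4) mem_lp_rows(4))
  show ?thesis
  proof (cases "t = 0")
    case True
    then have "x a = 0" if "a \<in> A" for a using box[OF that] by linarith
    then show ?thesis using True by simp
  next
    case False
    with \<open>t \<ge> 0\<close> have t: "t > 0" by simp
    have "lp_feasible A Ucal (\<lambda>a. x a / t)"
      unfolding lp_feasible_def
    proof (intro conjI ballI)
      fix U assume "U \<in> Ucal"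
      then show "1 \<le> (\<Sum>a\<in>delta_in A U. x a / t)"
        using cut t by (simp add: sum_divide_distrib[symmetric])
    next
      fix a assume "a \<in> A"
      then show "0 \<le> x a / t" "x a / t \<le> 1" using box t by simp_all
    qed
    then have "L \<le> (\<Sum>a\<in>A. cost a * (x a / t)) - M"
      using L unfolding lp_optimal_value_def lp_obj_def by blast
    also have "\<dots> = (\<Sum>a\<in>A. cost a * x a) / t - M" by (simp add: sum_divide_distrib)
    finally show ?thesis using t by (simp add: field_simps)
  qed
qed

lemma cut_lp_farkas_multipliers:
  assumes "finite A" "finite Ucal" "lp_optimal_value A Ucal cost M L"
  obtains l where "\<forall>i\<in>lp_rows Ucal A. l i \<ge> 0"
    and "\<And>x t. (\<Sum>a\<in>A. cost a * x a) - (L + M) * t =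
                 (\<Sum>i\<in>lp_rows Ucal A. l i * cut_lp_row A i (x, t))"
proof -
  define b where "b p = (\<Sum>a\<in>A. cost a * fst p a) - (L + M) * snd p" for p
  have "\<exists>l. (\<forall>i\<in>lp_rows Ucal A. l i \<ge> 0) \<and>
      (\<forall>p. b p = (\<Sum>i\<in>lp_rows Ucal A. l i * cut_lp_row A i p))"
  proof (rule farkas_lemma)
    show "finite (lp_rows Ucal A)" using assms unfolding lp_rows_def by simp
    show "\<forall>i\<in>lp_rows Ucal A. comb_linear lp_comb (cut_lp_row A i)"
      using comb_linear_cut_lp_row[OF assms(1)] by blast
    show "comb_linear lp_comb b"
      unfolding comb_linear_def lp_comb_def b_def
      by (auto simp: sum_subtractf sum_distrib_left algebra_simps)
    show "\<forall>p. (\<forall>i\<in>lp_rows Ucal A. cut_lp_row A i p \<ge> 0) \<longrightarrow> b p \<ge> 0"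
      using homogenized_cut_lp_bound[OF assms(3)] by (force simp: b_def)
  qed
  then show ?thesis using that unfolding b_def by force
qed

lemma cut_lp_strong_duality:
  assumes "finite A" "finite Ucal" "lp_optimal_value A Ucal cost M L"
  obtains \<pi> \<sigma> where "dual_feasible A Ucal cost \<pi> \<sigma>" "L \<le> dual_obj A Ucal M \<pi> \<sigma>"
proof -
  obtain l where l: "\<forall>i\<in>lp_rows Ucal A. l i \<ge> 0"
    and eq: "\<And>x t. (\<Sum>a\<in>A. cost a * x a) - (L + M) * t =
                 (\<Sum>i\<in>lp_rows Ucal A. l i * cut_lp_row A i (x, t))"
    using cut_lp_farkas_multipliers[OF assms] by blast
  define \<pi> where "\<pi> U = l (Cut_row U)" for U
  define \<sigma> where "\<sigma> a = l (Upper_row a)" for a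
  note expand = eq[unfolded sum_lp_rows[OF assms(2,1)]]
  have "dual_feasible A Ucal cost \<pi> \<sigma>"
    unfolding dual_feasible_def
  proof (intro conjI ballI)
    fix e assume e: "e \<in> A"
    \<comment> \<open>Evaluate the Farkas identity at the unit vector of the arc \<open>e\<close>.\<close>
    define \<chi> where "\<chi> a = (if a = e then 1 else 0 :: real)" for a
    have "cut_lp_row A (Cut_row U) (\<chi>, 0) = (if e \<in> delta_in A U then 1 else 0)" for U
      using assms(1) by (simp add: \<chi>_def delta_in_def sum.delta')
    then have "(\<Sum>U\<in>Ucal. l (Cut_row U) * cut_lp_row A (Cut_row U) (\<chi>, 0))
        = (\<Sum>U\<in>Ucal. if e \<in> delta_in A U then \<pi> U else 0)"
      by (intro sum.cong) (simp_all add: \<pi>_def)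
    also have "\<dots> = (\<Sum>U\<in>{U \<in> Ucal. e \<in> delta_in A U}. \<pi> U)"
      using assms(2) by (simp add: sum.inter_filter)
    finally have "(\<Sum>U\<in>Ucal. l (Cut_row U) * cut_lp_row A (Cut_row U) (\<chi>, 0))
        = (\<Sum>U\<in>{U \<in> Ucal. e \<in> delta_in A U}. \<pi> U)" .
    moreover have "(\<Sum>a\<in>A. cost a * \<chi> a) = cost e"
      "(\<Sum>a\<in>A. l (Lower_row a) * cut_lp_row A (Lower_row a) (\<chi>, 0)) = l (Lower_row e)"
      "(\<Sum>a\<in>A. l (Upper_row a) * cut_lp_row A (Upper_row a) (\<chi>, 0)) = - \<sigma> e"
      using assms(1) e by (simp_all add: \<chi>_def \<sigma>_def if_distrib sum_negf cong: if_cong)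
    ultimately have "cost e = (\<Sum>U\<in>{U \<in> Ucal. e \<in> delta_in A U}. \<pi> U) + l (Lower_row e) - \<sigma> e"
      using expand[of \<chi> 0] by simp
    moreover have "l (Lower_row e) \<ge> 0" using l e by simp
    ultimately show "(\<Sum>U\<in>{U \<in> Ucal. e \<in> delta_in A U}. \<pi> U) - \<sigma> e \<le> cost e" by simp
  qed (use l in \<open>simp_all add: \<pi>_def \<sigma>_def\<close>)
  moreover have "L \<le> dual_obj A Ucal M \<pi> \<sigma>"
  proof -
    have "l Scale_row \<ge> 0" using l by simp
    then show ?thesis
      using expand[of "\<lambda>_. 0" 1] by (simp add: dual_obj_def \<pi>_def \<sigma>_def sum_negf)
  qed
  ultimately show ?thesis using that by blast
qed

lemma lp_optimal_value_le_dual_optimal: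
  assumes "finite A" "finite Ucal" "lp_optimal_value A Ucal cost M L"
    and "dual_optimal A Ucal cost M \<pi> \<sigma>"
  shows "L \<le> dual_obj A Ucal M \<pi> \<sigma>"
proof -
  obtain \<pi>' \<sigma>' where "dual_feasible A Ucal cost \<pi>' \<sigma>'" "L \<le> dual_obj A Ucal M \<pi>' \<sigma>'"
    using cut_lp_strong_duality[OF assms(1-3)] .
  then show ?thesis using assms(4) unfolding dual_optimal_def by force
qed

lemma sum_cut_duals_le_cover:
  fixes \<pi> :: "'n set \<Rightarrow> real"
  assumes "finite X" "finite Ucal" "\<forall>U\<in>Ucal. \<pi> U \<ge> 0" "\<forall>U\<in>Ucal. X \<inter> delta_in A U \<noteq> {}"
  shows "(\<Sum>U\<in>Ucal. \<pi> U) \<le> (\<Sum>a\<in>X. \<Sum>U\<in>{U\<in>Ucal. a \<in> delta_in A U}. \<pi> U)"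
proof -
  have "(\<Sum>U\<in>Ucal. \<pi> U) \<le> (\<Sum>U\<in>Ucal. \<Sum>a\<in>{a\<in>X. a \<in> delta_in A U}. \<pi> U)"
  proof (rule sum_mono)
    fix U assume U: "U \<in> Ucal"
    have "{a\<in>X. a \<in> delta_in A U} \<noteq> {}" using assms(4) U by auto
    then have "1 \<le> real (card {a\<in>X. a \<in> delta_in A U})"
      using assms(1) by (simp add: Suc_leI card_gt_0_iff)
    then show "\<pi> U \<le> (\<Sum>a\<in>{a\<in>X. a \<in> delta_in A U}. \<pi> U)"
      using assms(3) U mult_right_mono[of 1 _ "\<pi> U"] by simp
  qed
  also have "\<dots> = (\<Sum>a\<in>X. \<Sum>U\<in>{U\<in>Ucal. a \<in> delta_in A U}. \<pi> U)"
    using assms(1,2) by (rule sum.swap_restrict[symmetric])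
  finally show ?thesis .
qed

lemma cover_cost_ge_reduced_costs:
  assumes "finite A" "finite Ucal" "dual_feasible A Ucal cost \<pi> \<sigma>"
    and "X \<subseteq> A" "\<forall>U\<in>Ucal. X \<inter> delta_in A U \<noteq> {}" "Y \<subseteq> X"
  shows "(\<Sum>a\<in>Y. reduced_cost A Ucal cost \<pi> a) + (\<Sum>U\<in>Ucal. \<pi> U) - (\<Sum>a\<in>A. \<sigma> a)
      \<le> (\<Sum>a\<in>X. cost a)"
proof -
  let ?red = "reduced_cost A Ucal cost \<pi>"
  have X: "finite X" using assms(1,4) finite_subset by blast
  have \<pi>: "\<forall>U\<in>Ucal. \<pi> U \<ge> 0" and \<sigma>: "\<forall>a\<in>A. \<sigma> a \<ge> 0"
    and red: "\<forall>a\<in>A. - \<sigma> a \<le> ?red a"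
    using assms(3) unfolding dual_feasible_def reduced_cost_def by auto
  have "(\<Sum>a\<in>X - Y. - \<sigma> a) \<le> (\<Sum>a\<in>X - Y. ?red a)"
    using red assms(4) by (intro sum_mono) auto
  moreover have "(\<Sum>a\<in>X - Y. \<sigma> a) \<le> (\<Sum>a\<in>A. \<sigma> a)"
    using assms(1,4) \<sigma> by (intro sum_mono2) auto
  moreover have "(\<Sum>a\<in>X. ?red a) = (\<Sum>a\<in>Y. ?red a) + (\<Sum>a\<in>X - Y. ?red a)"
    using X assms(6) by (metis add.commute sum.subset_diff)
  moreover have "(\<Sum>a\<in>X. cost a) =
      (\<Sum>a\<in>X. ?red a) + (\<Sum>a\<in>X. \<Sum>U\<in>{U\<in>Ucal. a \<in> delta_in A U}. \<pi> U)"
    unfolding reduced_cost_def by (simp add: sum_subtractf)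
  ultimately show ?thesis
    using sum_cut_duals_le_cover[OF X assms(2) \<pi> assms(5)] by (simp add: sum_negf)
qed

section \<open>From prize-collecting trees to Steiner arborescences\<close>

lemma rtrancl_enters_set:
  assumes "(u, w) \<in> X\<^sup>*" "u \<notin> U" "w \<in> U"
  shows "\<exists>a b. (a, b) \<in> X \<and> a \<notin> U \<and> b \<in> U"
  using assms by (induction rule: rtrancl_induct) auto

lemma rtrancl_map_pairs:
  assumes "(u, w) \<in> R\<^sup>*" "\<And>a b. (a, b) \<in> R \<Longrightarrow> (f a, f b) \<in> S"
  shows "(f u, f w) \<in> S\<^sup>*"
  using assms by (induction rule: rtrancl_induct) (auto intro: rtrancl_into_rtrancl)

definition adj_dist :: "'v set set \<Rightarrow> 'v \<Rightarrow> 'v \<Rightarrow> nat" where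
  "adj_dist ES r w = (LEAST n. (r, w) \<in> adj ES ^^ n)"

definition bfs_orientation :: "'v set set \<Rightarrow> 'v \<Rightarrow> ('v \<times> 'v) set" where
  "bfs_orientation ES r = {(v, w). {v, w} \<in> ES \<and> adj_dist ES r w = Suc (adj_dist ES r v)}"

lemma inj_on_bfs_orientation: "inj_on (\<lambda>(v, w). {v, w}) (bfs_orientation ES r)"
proof (rule inj_onI, clarify)
  fix a b c e
  assume "(a, b) \<in> bfs_orientation ES r" "(c, e) \<in> bfs_orientation ES r" "{a, b} = {c, e}"
  then show "a = c \<and> b = e" unfolding bfs_orientation_def by (auto simp: doubleton_eq_iff)
qed

lemma bfs_orientation_reaches:
  assumes "(r, w) \<in> (adj ES)\<^sup>*"
  shows "(r, w) \<in> (bfs_orientation ES r)\<^sup>*"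
proof -
  have "(r, w) \<in> (bfs_orientation ES r)\<^sup>*"
    if "adj_dist ES r w = n" "(r, w) \<in> adj ES ^^ k" for n k w
    using that
  proof (induction n arbitrary: k w)
    case 0
    then have "(r, w) \<in> adj ES ^^ 0" unfolding adj_dist_def by (metis LeastI)
    then show ?case by simp
  next
    case (Suc m)
    then have "(r, w) \<in> adj ES ^^ Suc m" unfolding adj_dist_def by (metis LeastI)
    then obtain v where rv: "(r, v) \<in> adj ES ^^ m" and vw: "(v, w) \<in> adj ES" by auto
    have "(r, v) \<in> adj ES ^^ adj_dist ES r v" unfolding adj_dist_def using rv by (rule LeastI)
    with vw have "(r, w) \<in> adj ES ^^ Suc (adj_dist ES r v)" by auto
    then have "adj_dist ES r w \<le> Suc (adj_dist ES r v)" unfolding adj_dist_def by (rule Least_le)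
    moreover have "adj_dist ES r v \<le> m" unfolding adj_dist_def using rv by (rule Least_le)
    ultimately have "adj_dist ES r v = m" using Suc.prems(1) by simp
    then have "(v, w) \<in> bfs_orientation ES r"
      using vw Suc.prems(1) unfolding bfs_orientation_def adj_def by simp
    moreover have "(r, v) \<in> (bfs_orientation ES r)\<^sup>*" using Suc.IH \<open>adj_dist ES r v = m\<close> rv by blast
    ultimately show ?case by simp
  qed
  then show ?thesis using assms by (metis rtrancl_power)
qed

text \<open>The root arc has to enter the tree at a potential terminal \<open>r\<close>: Transformation 1
  has arcs \<open>(r', t)\<close> only for \<open>t \<in> T\<^sub>p\<close>.\<close>

definition arborescence_of_tree ::
  "'v set \<Rightarrow> ('v \<Rightarrow> real) \<Rightarrow> 'v set \<Rightarrow> 'v set set \<Rightarrow> 'v \<Rightarrow> ('v sap_node \<times> 'v sap_node) set" where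
  "arborescence_of_tree V p VS ES r =
     {(Root, Orig r), (Orig r, V0)}
     \<union> (\<lambda>(v, w). (Orig v, Orig w)) ` bfs_orientation ES r
     \<union> (\<lambda>t. (Orig t, Copy t)) ` (VS \<inter> Tp V p)
     \<union> (\<lambda>t. (V0, Copy t)) ` (Tp V p - VS)"

lemma arborescence_of_tree_subset_sap_arcs:
  assumes "ES \<subseteq> E" "r \<in> Tp V p"
  shows "arborescence_of_tree V p VS ES r \<subseteq> sap_arcs V E p"
proof -
  have "(\<lambda>(v, w). (Orig v, Orig w)) ` bfs_orientation ES r \<subseteq> {(Orig v, Orig w) | v w. {v, w} \<in> E}"
    using assms(1) unfolding bfs_orientation_def by auto
  moreover have "(\<lambda>t. (Orig t, Copy t)) ` (VS \<inter> Tp V p) \<subseteq> {(Orig t, Copy t) | t. t \<in> Tp V p}"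
    "(\<lambda>t. (V0, Copy t)) ` (Tp V p - VS) \<subseteq> {(V0, Copy t) | t. t \<in> Tp V p}"
    by auto
  moreover have "(Root, Orig r) \<in> sap_arcs V E p" "(Orig r, V0) \<in> sap_arcs V E p"
    using assms(2) unfolding sap_arcs_def by blast+
  ultimately show ?thesis unfolding arborescence_of_tree_def sap_arcs_def by blast
qed

lemma arborescence_of_tree_reaches_copies:
  assumes "connected_sub VS ES" "r \<in> VS" "t \<in> Tp V p"
  shows "(Root, Copy t) \<in> (arborescence_of_tree V p VS ES r)\<^sup>*"
proof -
  let ?X = "arborescence_of_tree V p VS ES r"
  have root: "(Root, Orig r) \<in> ?X" "(Orig r, V0) \<in> ?X"
    unfolding arborescence_of_tree_def by simp_all
  show ?thesis
  proof (cases "t \<in> VS")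
    case True
    have "(r, t) \<in> (bfs_orientation ES r)\<^sup>*"
      using assms(1,2) True unfolding connected_sub_def by (blast intro: bfs_orientation_reaches)
    then have "(Orig r, Orig t) \<in> ?X\<^sup>*"
      by (rule rtrancl_map_pairs) (auto simp: arborescence_of_tree_def)
    moreover have "(Orig t, Copy t) \<in> ?X"
      using True assms(3) unfolding arborescence_of_tree_def by auto
    ultimately show ?thesis using root by (meson converse_rtrancl_into_rtrancl rtrancl_into_rtrancl)
  next
    case False
    then have "(V0, Copy t) \<in> ?X" using assms(3) unfolding arborescence_of_tree_def by auto
    then show ?thesis using root by (meson converse_rtrancl_into_rtrancl r_into_rtrancl)
  qed
qed

lemma arborescence_of_tree_meets_cuts:
  assumes "ES \<subseteq> E" "connected_sub VS ES" "r \<in> VS" "r \<in> Tp V p"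
    and "U \<in> admissible_cuts V p"
  shows "arborescence_of_tree V p VS ES r \<inter> delta_in (sap_arcs V E p) U \<noteq> {}"
proof -
  have "Root \<notin> U" "U \<inter> sap_terminals V p \<noteq> {}"
    using assms(5) by (simp_all add: admissible_cuts_def)
  then obtain t where t: "t \<in> Tp V p" "Copy t \<in> U" unfolding sap_terminals_def by blast
  have "(Root, Copy t) \<in> (arborescence_of_tree V p VS ES r)\<^sup>*"
    using arborescence_of_tree_reaches_copies[OF assms(2,3) t(1)] .
  then obtain a b where ab: "(a, b) \<in> arborescence_of_tree V p VS ES r" "a \<notin> U" "b \<in> U"
    using rtrancl_enters_set[OF _ \<open>Root \<notin> U\<close> t(2)] by blast
  then have "(a, b) \<in> delta_in (sap_arcs V E p) U"
    using arborescence_of_tree_subset_sap_arcs[OF assms(1,4)] unfolding delta_in_def by auto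
  with ab(1) show ?thesis by blast
qed

lemma arborescence_of_tree_cost_le:
  fixes V :: "'v set"
  assumes inst: "pcstp_instance V E c p" and tree: "is_tree V E VS ES"
  shows "(\<Sum>a\<in>arborescence_of_tree V p VS ES r. sap_cost V c p a) - bigM V p
      \<le> pcst_cost V c p VS ES"
proof -
  let ?cost = "sap_cost V c p" and ?T = "Tp V p" and ?Or = "bfs_orientation ES r"
  define P where "P = {(Root, Orig r), (Orig r, V0)}"
  define Ar where "Ar = (\<lambda>(v, w). (Orig v, Orig w)) ` ?Or"
  define C1 where "C1 = (\<lambda>t. (Orig t, Copy t)) ` (VS \<inter> ?T)"
  define C2 where "C2 = (\<lambda>t. (V0 :: 'v sap_node, Copy t)) ` (?T - VS)"
  have V: "finite V" and E: "E \<subseteq> Pow V" and c: "\<forall>e\<in>E. c e > 0" and p: "\<forall>v\<in>V. p v \<ge> 0"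
    using inst unfolding pcstp_instance_def by auto
  have ES: "ES \<subseteq> E" "\<forall>e\<in>ES. e \<subseteq> VS" and VS: "VS \<subseteq> V"
    using tree unfolding is_tree_def by auto
  have "?Or \<subseteq> VS \<times> VS" using ES(2) unfolding bfs_orientation_def by auto
  then have Or: "finite ?Or" using VS V by (meson finite_SigmaI finite_subset)
  have T: "finite ?T" "?T \<subseteq> V" using V unfolding Tp_def by auto
  have "(\<Sum>a\<in>Ar. ?cost a) = (\<Sum>(v, w)\<in>?Or. c {v, w})"
    unfolding Ar_def by (subst sum.reindex) (auto simp: inj_on_def sap_cost_def intro!: sum.cong)
  also have "\<dots> = (\<Sum>e\<in>(\<lambda>(v, w). {v, w}) ` ?Or. c e)"
    using sum.reindex[OF inj_on_bfs_orientation, of c ES r] by (simp add: comp_def split_def)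
  also have "\<dots> \<le> (\<Sum>e\<in>ES. c e)"
  proof (rule sum_mono2)
    show "finite ES" using ES(1) E V by (meson finite_Pow_iff finite_subset)
    show "(\<lambda>(v, w). {v, w}) ` ?Or \<subseteq> ES" unfolding bfs_orientation_def by auto
  qed (use ES(1) c in \<open>auto simp: less_imp_le\<close>)
  finally have edges: "(\<Sum>a\<in>Ar. ?cost a) \<le> (\<Sum>e\<in>ES. c e)" .
  have "(\<Sum>a\<in>C2. ?cost a) = (\<Sum>t\<in>?T - VS. p t)"
    unfolding C2_def by (subst sum.reindex) (auto simp: inj_on_def sap_cost_def)
  also have "\<dots> \<le> (\<Sum>v\<in>V - VS. p v)" using T V p by (intro sum_mono2) auto
  finally have prizes: "(\<Sum>a\<in>C2. ?cost a) \<le> (\<Sum>v\<in>V - VS. p v)" .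
  have "(\<Sum>a\<in>C1. ?cost a) = 0" unfolding C1_def by (intro sum.neutral) (auto simp: sap_cost_def)
  moreover have "(\<Sum>a\<in>P. ?cost a) = bigM V p" unfolding P_def by (simp add: sap_cost_def)
  moreover have "(\<Sum>a\<in>arborescence_of_tree V p VS ES r. ?cost a) =
      (\<Sum>a\<in>P. ?cost a) + (\<Sum>a\<in>Ar. ?cost a) + (\<Sum>a\<in>C1. ?cost a) + (\<Sum>a\<in>C2. ?cost a)"
  proof -
    have fin: "finite P" "finite Ar" "finite C1" "finite C2"
      using Or T unfolding P_def Ar_def C1_def C2_def by auto
    have "P \<inter> Ar = {}" "(P \<union> Ar) \<inter> C1 = {}" "(P \<union> Ar \<union> C1) \<inter> C2 = {}"
      unfolding P_def Ar_def C1_def C2_def by auto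
    then show ?thesis
      using fin unfolding arborescence_of_tree_def P_def[symmetric] Ar_def[symmetric]
        C1_def[symmetric] C2_def[symmetric]
      by (simp add: sum.union_disjoint)
  qed
  ultimately show ?thesis using edges prizes unfolding pcst_cost_def by linarith
qed

lemma finite_sap_arcs:
  assumes "pcstp_instance V E c p"
  shows "finite (sap_arcs V E p)"
proof -
  have V: "finite V" and E: "E \<subseteq> Pow V" using assms unfolding pcstp_instance_def by auto
  then have "finite (sap_nodes V p)" unfolding sap_nodes_def Tp_def by simp
  moreover have "sap_arcs V E p \<subseteq> sap_nodes V p \<times> sap_nodes V p"
    using E unfolding sap_arcs_def sap_nodes_def Tp_def by blast
  ultimately show ?thesis by (meson finite_SigmaI finite_subset)
qed

lemma finite_admissible_cuts:
  assumes "finite V"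
  shows "finite (admissible_cuts V p)"
proof -
  have "finite (sap_nodes V p)" using assms unfolding sap_nodes_def Tp_def by simp
  moreover have "admissible_cuts V p \<subseteq> Pow (sap_nodes V p)" unfolding admissible_cuts_def by auto
  ultimately show ?thesis by (meson finite_Pow_iff finite_subset)
qed

text \<open>If an optimal tree avoided all potential terminals it would cost at least \<open>M\<close>, while a
  single potential terminal \<open>t\<close> as a tree costs \<open>M - p t < M\<close>.\<close>

lemma pcst_optimal_meets_Tp:
  assumes inst: "pcstp_instance V E c p" and opt: "pcst_optimal V E c p VS ES"
    and t: "t \<in> Tp V p"
  shows "VS \<inter> Tp V p \<noteq> {}"
proof
  assume none: "VS \<inter> Tp V p = {}"
  have V: "finite V" and c: "\<forall>e\<in>E. c e > 0" and p: "\<forall>v\<in>V. p v \<ge> 0"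
    using inst unfolding pcstp_instance_def by auto
  have ES: "ES \<subseteq> E" using opt unfolding pcst_optimal_def is_tree_def by auto
  have tV: "t \<in> V" using t unfolding Tp_def by simp
  have M: "(\<Sum>v\<in>V. p v) = bigM V p"
    unfolding bigM_def using V p by (intro sum.mono_neutral_right) (auto simp: Tp_def)
  have "bigM V p \<le> (\<Sum>v\<in>V - VS. p v)"
    unfolding bigM_def using none V p by (intro sum_mono2) (auto simp: Tp_def)
  moreover have "(\<Sum>e\<in>ES. c e) \<ge> 0" using ES c by (intro sum_nonneg) (auto simp: less_imp_le)
  moreover have "is_tree V E {t} {}"
    unfolding is_tree_def connected_sub_def has_cycle_def using tV by (auto intro: exI[of _ 0])
  then have "pcst_cost V c p VS ES \<le> pcst_cost V c p {t} {}"
    using opt unfolding pcst_optimal_def by blast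
  moreover have "pcst_cost V c p {t} {} = bigM V p - p t"
    unfolding pcst_cost_def using M V tV by (simp add: sum_diff1)
  ultimately show False using t unfolding pcst_cost_def Tp_def by simp
qed

theorem proposition6:
  fixes V :: "'v set" and E :: "'v set set" and c :: "'v set \<Rightarrow> real" and p :: "'v \<Rightarrow> real"
    and Ucal :: "'v sap_node set set" and L :: real
    and \<pi> :: "'v sap_node set \<Rightarrow> real" and B :: real and ti :: 'v and Tbar :: "'v set"
  assumes inst: "pcstp_instance V E c p"
    and Ucal: "Ucal \<subseteq> admissible_cuts V p"
    and L: "lp_optimal_value (sap_arcs V E p) Ucal (sap_cost V c p) (bigM V p) L"
    and dual: "\<exists>\<sigma>. dual_optimal (sap_arcs V E p) Ucal (sap_cost V c p) (bigM V p) \<pi> \<sigma>"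
    and B: "\<forall>VS ES. pcst_optimal V E c p VS ES \<longrightarrow> pcst_cost V c p VS ES \<le> B"
    and ti: "ti \<in> Tp V p"
    and Tbar: "Tbar \<subseteq> Tp V p"
    and Tbar_impl: "\<forall>VS ES. pcst_optimal V E c p VS ES \<longrightarrow> VS \<inter> Tbar \<noteq> {} \<longrightarrow> ti \<in> VS"
    and gap: "(\<Sum>t\<in>Tbar. reduced_cost (sap_arcs V E p) Ucal (sap_cost V c p) \<pi> (V0, Copy t)) + L > B"
  shows "\<forall>VS ES. pcst_optimal V E c p VS ES \<longrightarrow> ti \<in> VS"
proof (intro allI impI, rule ccontr)
  fix VS ES assume opt: "pcst_optimal V E c p VS ES" and "ti \<notin> VS"
  let ?A = "sap_arcs V E p" and ?cost = "sap_cost V c p"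
  let ?red = "reduced_cost ?A Ucal ?cost \<pi>"
  have ES: "ES \<subseteq> E" and conn: "connected_sub VS ES" and tree: "is_tree V E VS ES"
    using opt unfolding pcst_optimal_def is_tree_def by auto
  obtain r where r: "r \<in> VS" "r \<in> Tp V p" using pcst_optimal_meets_Tp[OF inst opt ti] by blast
  define X where "X = arborescence_of_tree V p VS ES r"
  obtain \<sigma> where \<sigma>: "dual_optimal ?A Ucal ?cost (bigM V p) \<pi> \<sigma>" using dual by blast
  have "finite V" using inst unfolding pcstp_instance_def by blast
  then have fin: "finite ?A" "finite Ucal"
    using finite_sap_arcs[OF inst] finite_admissible_cuts Ucal finite_subset by blast+
  have "Tbar \<subseteq> Tp V p - VS" using Tbar Tbar_impl opt \<open>ti \<notin> VS\<close> by blast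
  then have Y: "(\<lambda>t. (V0, Copy t)) ` Tbar \<subseteq> X"
    unfolding X_def arborescence_of_tree_def by blast
  have "X \<subseteq> ?A" unfolding X_def using arborescence_of_tree_subset_sap_arcs[OF ES r(2)] .
  moreover have "\<forall>U\<in>Ucal. X \<inter> delta_in ?A U \<noteq> {}"
    using arborescence_of_tree_meets_cuts[OF ES conn r] Ucal unfolding X_def by blast
  moreover have "(\<Sum>a\<in>(\<lambda>t. (V0, Copy t)) ` Tbar. ?red a) = (\<Sum>t\<in>Tbar. ?red (V0, Copy t))"
    by (simp add: sum.reindex inj_on_def)
  ultimately have "(\<Sum>t\<in>Tbar. ?red (V0, Copy t)) + dual_obj ?A Ucal (bigM V p) \<pi> \<sigma>
      \<le> (\<Sum>a\<in>X. ?cost a) - bigM V p"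
    using cover_cost_ge_reduced_costs[OF fin _ _ _ Y] \<sigma>
    unfolding dual_obj_def dual_optimal_def by force
  also have "\<dots> \<le> B"
    using arborescence_of_tree_cost_le[OF inst tree, of r] B opt unfolding X_def by fastforce
  finally show False
    using lp_optimal_value_le_dual_optimal[OF fin L \<sigma>] gap by linarith
qed

end
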